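(* Consider the one-parameter family of maps $f(x,r)=x^2\exp(r-x)+k$ with bifurcation parameter $r\in\mathbb{R}$, where $k\in[0,3-2\sqrt2)$ is fixed. Then the family undergoes a fold bifurcation. More precisely: for $k=0$, the family undergoes a fold bifurcation at the fixed point $x_0=1$ for the bifurcation value $r_0=1$; for fixed $0<k<3-2\sqrt2$, there are two bifurcation values \[ r_{0,1}=x_{0,1}-\ln\big((2-x_{0,1})x_{0,1}\big),\qquad r_{0,2}=x_{0,2}-\ln\big((2-x_{0,2})x_{0,2}\big), \] where \[ x_{0,1}=\frac{k+1-\sqrt{k^2-6k+1}}{2},\qquad x_{0,2}=\frac{k+1+\sqrt{k^2-6k+1}}{2}, \] and for $i=1,2$ the family undergoes a fold bifurcation at the fixed point $x_{0,i}$ of $f(\cdot,r_{0,i})$ for the bifurcation value $r=r_{0,i}$.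
   Context: For a smooth one-parameter family $x\mapsto f(x,a)$ of maps of $\mathbb{R}$ with a fixed point $x_0$ at $a=a_0$, one says that a fold (saddle-node, tangent) bifurcation occurs at $x_0$ for $a=a_0$ if $\frac{\partial f}{\partial x}(x_0,a_0)=1$ and the nondegeneracy conditions (A.1) $\frac{\partial^2 f}{\partial x^2}(x_0,a_0)\neq0$ and (A.2) $\frac{\partial f}{\partial a}(x_0,a_0)\neq 0$ hold; then smooth invertible changes of coordinates and parameter transform the system into $\eta\mapsto\beta+\eta\pm\eta^2+O(\eta^3)$. *)

theory Defs
  imports "HOL-Analysis.Analysis"
begin

text \<open>The second
  partial derivative is expressed via a function fx giving the first partial
  derivative in x near x0 (for the parameter a0), differentiable at x0.\<close>

definition fold_bifurcation :: "(real \<Rightarrow> real \<Rightarrow> real) \<Rightarrow> real \<Rightarrow> real \<Rightarrow> bool" where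
  "fold_bifurcation f x0 a0 \<longleftrightarrow>
     f x0 a0 = x0 \<and>
     (\<exists>fx fxx fa. (\<forall>\<^sub>F x in nhds x0. ((\<lambda>y. f y a0) has_real_derivative fx x) (at x)) \<and>
        fx x0 = 1 \<and>
        (fx has_real_derivative fxx) (at x0) \<and> fxx \<noteq> 0 \<and>
        ((\<lambda>a. f x0 a) has_real_derivative fa) (at a0) \<and> fa \<noteq> 0)"

end

theory Submission
  imports Defs
begin

text \<open>Tangency \<open>\<partial>\<^sub>x f = (2x - x\<^sup>2) exp (r - x) = 1\<close> at a fixed point means
  \<open>exp (r - x) = 1 / ((2 - x) x)\<close>, i.e. \<open>r = x - ln ((2 - x) x)\<close>, and turns the fixed point
  equation into the quadratic \<open>x\<^sup>2 - (k + 1) x + 2k = 0\<close>, whose roots lie in \<open>(k, 1)\<close> for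
  \<open>0 < k < 3 - 2\<surd>2\<close>.  Condition (A.2), \<open>\<partial>\<^sub>r f = x\<^sup>2 exp (r - x) \<noteq> 0\<close>, is automatic, and
  \<open>\<partial>\<^sub>x\<^sup>2 f = (x\<^sup>2 - 4x + 2) exp (r - x)\<close> could only vanish at a common root of the two
  quadratics, which exists only when the discriminant \<open>k\<^sup>2 - 6k + 1\<close> vanishes.\<close>

lemma fold_bifurcationI:
  assumes "f x0 a0 = x0"
    and "\<And>x. ((\<lambda>y. f y a0) has_real_derivative fx x) (at x)" and "fx x0 = 1"
    and "(fx has_real_derivative fxx) (at x0)" and "fxx \<noteq> 0"
    and "((\<lambda>a. f x0 a) has_real_derivative fa) (at a0)" and "fa \<noteq> 0"
  shows "fold_bifurcation f x0 a0"
  unfolding fold_bifurcation_def using assms by (blast intro: always_eventually)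

lemma fold_bifurcation_sq_exp:
  fixes k x0 :: real
  assumes "0 < x0" "x0 < 2"
    and fixed: "x0\<^sup>2 - (k + 1) * x0 + 2 * k = 0"
    and nondeg: "x0\<^sup>2 - 4 * x0 + 2 \<noteq> 0"
  shows "fold_bifurcation (\<lambda>x r. x\<^sup>2 * exp (r - x) + k) x0 (x0 - ln ((2 - x0) * x0))"
    (is "fold_bifurcation _ _ ?r0")
proof (rule fold_bifurcationI)
  have "(2 - x0) * x0 > 0" using assms by simp
  then have exp_r0: "exp (?r0 - x0) = 1 / ((2 - x0) * x0)"
    by (simp add: exp_diff exp_minus inverse_eq_divide)
  have "x0\<^sup>2 * exp (?r0 - x0) = x0 / (2 - x0)"
    unfolding exp_r0 using assms by (simp add: power2_eq_square)
  also have "\<dots> = x0 - k"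
    using fixed \<open>x0 < 2\<close> by (simp add: field_simps power2_eq_square)
  finally show "x0\<^sup>2 * exp (?r0 - x0) + k = x0" by simp
  show "((\<lambda>y. y\<^sup>2 * exp (?r0 - y) + k) has_real_derivative (2 * x - x\<^sup>2) * exp (?r0 - x)) (at x)"
    for x by (auto intro!: derivative_eq_intros simp: algebra_simps power2_eq_square)
  show "(2 * x0 - x0\<^sup>2) * exp (?r0 - x0) = 1"
    unfolding exp_r0 using assms by (simp add: power2_eq_square field_simps)
  show "((\<lambda>x. (2 * x - x\<^sup>2) * exp (?r0 - x)) has_real_derivative
          (x0\<^sup>2 - 4 * x0 + 2) * exp (?r0 - x0)) (at x0)"
    by (auto intro!: derivative_eq_intros simp: algebra_simps power2_eq_square)
  show "(x0\<^sup>2 - 4 * x0 + 2) * exp (?r0 - x0) \<noteq> 0"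
    using nondeg by simp
  show "((\<lambda>r. x0\<^sup>2 * exp (r - x0) + k) has_real_derivative x0\<^sup>2 * exp (?r0 - x0)) (at ?r0)"
    by (auto intro!: derivative_eq_intros)
  show "x0\<^sup>2 * exp (?r0 - x0) \<noteq> 0"
    using \<open>0 < x0\<close> by simp
qed

lemma common_root_imp_discriminant_zero:
  fixes k x :: real
  assumes "x\<^sup>2 - (k + 1) * x + 2 * k = 0" and "x\<^sup>2 - 4 * x + 2 = 0"
  shows "k\<^sup>2 - 6 * k + 1 = 0"
proof -
  have lin: "(3 - k) * x = 2 * (1 - k)"
    using assms by (simp add: algebra_simps)
  have "- 2 * (k\<^sup>2 - 6 * k + 1) = (2 * (1 - k))\<^sup>2 - 4 * (3 - k) * (2 * (1 - k)) + 2 * (3 - k)\<^sup>2"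
    by (simp add: power2_eq_square algebra_simps)
  also have "\<dots> = ((3 - k) * x)\<^sup>2 - 4 * (3 - k) * ((3 - k) * x) + 2 * (3 - k)\<^sup>2"
    by (simp only: lin)
  also have "\<dots> = (3 - k)\<^sup>2 * (x\<^sup>2 - 4 * x + 2)"
    by (simp add: power2_eq_square algebra_simps)
  finally show ?thesis
    using assms(2) by simp
qed

lemma discriminant_pos:
  fixes k :: real
  assumes "k < 3 - 2 * sqrt 2"
  shows "0 < k\<^sup>2 - 6 * k + 1"
proof -
  have "(2 * sqrt 2)\<^sup>2 < (3 - k)\<^sup>2"
    using assms by (intro power_strict_mono) auto
  then show ?thesis
    by (simp add: power2_eq_square algebra_simps)
qed

lemma fold_bifurcation_at_root:
  fixes k x0 :: real
  assumes "0 < k" "k < 3 - 2 * sqrt 2"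
    and root: "x0 = (k + 1 - sqrt (k\<^sup>2 - 6 * k + 1)) / 2 \<or> x0 = (k + 1 + sqrt (k\<^sup>2 - 6 * k + 1)) / 2"
  shows "fold_bifurcation (\<lambda>x r. x\<^sup>2 * exp (r - x) + k) x0 (x0 - ln ((2 - x0) * x0))"
proof (rule fold_bifurcation_sq_exp)
  define s where "s = sqrt (k\<^sup>2 - 6 * k + 1)"
  have x0_cases: "x0 = (k + 1 - s) / 2 \<or> x0 = (k + 1 + s) / 2"
    using root by (simp only: s_def)
  have disc: "0 < k\<^sup>2 - 6 * k + 1"
    using assms(2) by (rule discriminant_pos)
  then have s_sq: "s\<^sup>2 = k\<^sup>2 - 6 * k + 1" and "0 \<le> s"
    by (simp_all add: s_def)
  have "k < 1"
    using assms(2) real_sqrt_ge_one[of 2] by linarith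
  moreover have "s\<^sup>2 < (1 - k)\<^sup>2"
    using s_sq \<open>0 < k\<close> by (simp add: power2_eq_square algebra_simps)
  ultimately have "s < 1 - k"
    using \<open>0 \<le> s\<close> by (simp add: power_less_imp_less_base)
  then show "0 < x0" "x0 < 2"
    using x0_cases \<open>0 \<le> s\<close> \<open>0 < k\<close> by auto
  have "2 * x0 - (k + 1) = - s \<or> 2 * x0 - (k + 1) = s"
    using x0_cases by auto
  then have "(2 * x0 - (k + 1))\<^sup>2 = s\<^sup>2"
    by auto
  then show fixed: "x0\<^sup>2 - (k + 1) * x0 + 2 * k = 0"
    unfolding s_sq by (simp add: power2_eq_square algebra_simps)
  show "x0\<^sup>2 - 4 * x0 + 2 \<noteq> 0"
    using common_root_imp_discriminant_zero[OF fixed] disc by auto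
qed

theorem theorem2p3:
  fixes k :: real
  assumes "0 \<le> k" and "k < 3 - 2 * sqrt 2"
  defines "f \<equiv> (\<lambda>x r. x\<^sup>2 * exp (r - x) + k)"
  shows "(k = 0 \<longrightarrow> fold_bifurcation f 1 1) \<and>
         (0 < k \<longrightarrow>
            (let x01 = (k + 1 - sqrt (k\<^sup>2 - 6 * k + 1)) / 2;
                 x02 = (k + 1 + sqrt (k\<^sup>2 - 6 * k + 1)) / 2;
                 r01 = x01 - ln ((2 - x01) * x01);
                 r02 = x02 - ln ((2 - x02) * x02)
             in fold_bifurcation f x01 r01 \<and> fold_bifurcation f x02 r02))"
proof (intro conjI impI)
  assume "k = 0"
  then show "fold_bifurcation f 1 1"
    using fold_bifurcation_sq_exp[of 1 0] by (simp add: f_def)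
next
  assume "0 < k"
  then show "let x01 = (k + 1 - sqrt (k\<^sup>2 - 6 * k + 1)) / 2;
                 x02 = (k + 1 + sqrt (k\<^sup>2 - 6 * k + 1)) / 2;
                 r01 = x01 - ln ((2 - x01) * x01);
                 r02 = x02 - ln ((2 - x02) * x02)
             in fold_bifurcation f x01 r01 \<and> fold_bifurcation f x02 r02"
    unfolding f_def Let_def using fold_bifurcation_at_root[OF \<open>0 < k\<close> assms(2)] by blast
qed

end
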